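(* Let $N$ be even, $l\ge k>1$, and $\psi,\varphi$ Dirichlet characters mod $N$. There do not exist Hecke eigenforms $f\in\mathcal M_k(N,\psi)$ and $g\in\mathcal M_l(N,\varphi)$, both with nonzero constant term, such that $fg$ is a Hecke eigenform. Equivalently, $E_k^{\mathbf 1_1,\psi}\cdot E_l^{\mathbf 1_1,\varphi}=-\big(\tfrac{B_{k,\psi}}{2k}+\tfrac{B_{l,\varphi}}{2l}\big)E_{k+l}^{\mathbf 1_1,\psi\varphi}$ never holds with these forms being eigenforms.
   Context: $\mathcal M_k(N,\chi)$: weight-$k$ modular forms on $\Gamma_1(N)$ with Nebentypus $\chi$ (characters mod $N$, not necessarily primitive, extended by $0$ off the units). Hecke eigenform: nonzero form that is an eigenvector for all $T_n$ (including $n$ not coprime to $N$) and all $\langle n\rangle$. $E_k^{\mathbf 1_1,\chi}(z)=-\frac{B_{k,\chi}}{2k}+\sum_{n\ge1}\big(\sum_{d\mid n}\chi(d)d^{k-1}\big)q^n$, where $B_{k,\chi}$ is the generalized Bernoulli number defined by $\sum_{a=1}^{N}\chi(a)\frac{te^{at}}{e^{Nt}-1}=\sum_{n}B_{n,\chi}\frac{t^n}{n!}$. *)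

theory Defs
  imports "HOL-Analysis.Analysis"
begin

definition UHP :: "complex set" where
  "UHP = {z. Im z > 0}"

(* Integer 2x2 matrices (a,b,c,d) = [[a,b],[c,d]] *)
definition SL2Z :: "(int \<times> int \<times> int \<times> int) set" where
  "SL2Z = {(a,b,c,d). a * d - b * c = 1}"

definition Gamma0 :: "nat \<Rightarrow> (int \<times> int \<times> int \<times> int) set" where
  "Gamma0 N = {(a,b,c,d). (a,b,c,d) \<in> SL2Z \<and> int N dvd c}"

definition moebius :: "int \<times> int \<times> int \<times> int \<Rightarrow> complex \<Rightarrow> complex" where
  "moebius \<gamma> z = (case \<gamma> of (a,b,c,d) \<Rightarrow>
      (of_int a * z + of_int b) / (of_int c * z + of_int d))"

definition autfac :: "int \<times> int \<times> int \<times> int \<Rightarrow> complex \<Rightarrow> complex" where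
  "autfac \<gamma> z = (case \<gamma> of (a,b,c,d) \<Rightarrow> of_int c * z + of_int d)"

definition lower_right :: "int \<times> int \<times> int \<times> int \<Rightarrow> int" where
  "lower_right \<gamma> = (case \<gamma> of (a,b,c,d) \<Rightarrow> d)"

definition dirichlet_character :: "nat \<Rightarrow> (int \<Rightarrow> complex) \<Rightarrow> bool" where
  "dirichlet_character N chr \<longleftrightarrow> N > 0 \<and>
     (\<forall>a. chr (a + int N) = chr a) \<and>
     (\<forall>a b. chr (a * b) = chr a * chr b) \<and>
     chr 1 = 1 \<and>
     (\<forall>a. chr a = 0 \<longleftrightarrow> \<not> coprime a (int N))"

(* M_k(N,chi): holomorphic on the upper half plane, f|_k gamma = chi(d) f for
   gamma in Gamma_0(N) (hence invariant under Gamma_1(N)), and holomorphic at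
   all cusps (f|_k gamma bounded as Im z -> infinity, for every gamma in SL2(Z)) *)
definition modular_form :: "nat \<Rightarrow> nat \<Rightarrow> (int \<Rightarrow> complex) \<Rightarrow> (complex \<Rightarrow> complex) \<Rightarrow> bool" where
  "modular_form k N chr f \<longleftrightarrow>
     f holomorphic_on UHP \<and>
     (\<forall>\<gamma>\<in>Gamma0 N. \<forall>z\<in>UHP.
        f (moebius \<gamma> z) = chr (lower_right \<gamma>) * (autfac \<gamma> z) ^ k * f z) \<and>
     (\<forall>\<gamma>\<in>SL2Z. \<exists>C B. \<forall>z. Im z > C \<longrightarrow>
        cmod (f (moebius \<gamma> z) / (autfac \<gamma> z) ^ k) \<le> B)"

definition qcoeff :: "(complex \<Rightarrow> complex) \<Rightarrow> nat \<Rightarrow> complex" where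
  "qcoeff f n = integral {0..1} (\<lambda>x::real.
      f (of_real x + \<i>) * exp (- 2 * of_real pi * \<i> * of_nat n * (of_real x + \<i>)))"

(* m-th q-coefficient of T_n f for f in M_k(N,chi) (n >= 1, any n, including
   n not coprime to N, with chi extended by zero) *)
definition hecke_coeff :: "nat \<Rightarrow> (int \<Rightarrow> complex) \<Rightarrow> nat \<Rightarrow> (complex \<Rightarrow> complex) \<Rightarrow> nat \<Rightarrow> complex" where
  "hecke_coeff k chr n f m =
     (\<Sum>d | d dvd gcd m n. chr (int d) * of_nat d ^ (k - 1) * qcoeff f (m * n div d\<^sup>2))"

(* Hecke eigenform in M_k(N,chi): nonzero, and eigenvector of every T_n (n>=1).
   The diamond operators act by chi on M_k(N,chi), so they are automatic. *)
definition hecke_eigenform :: "nat \<Rightarrow> nat \<Rightarrow> (int \<Rightarrow> complex) \<Rightarrow> (complex \<Rightarrow> complex) \<Rightarrow> bool" where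
  "hecke_eigenform k N chr f \<longleftrightarrow>
     modular_form k N chr f \<and> (\<exists>z\<in>UHP. f z \<noteq> 0) \<and>
     (\<forall>n\<ge>1. \<exists>ev. \<forall>m. hecke_coeff k chr n f m = ev * qcoeff f m)"

end

(*
  Since N is even, chi(2) = 0 for every character chi mod N, so T_2 acts on the
  constant term of an eigenform f = sum a_n q^n as the identity: a nonzero constant
  term forces the T_2-eigenvalue to be 1, hence a_2 = a_1.  For f, g and fg this
  gives a_2 = a_1, b_2 = b_1 and a_0 b_2 + a_1 b_1 + a_2 b_0 = a_0 b_1 + a_1 b_0,
  i.e. a_1 b_1 = 0.  But an eigenform with a_1 = 0 has a_n = a_1(T_n f) = 0 for all
  n >= 1, so it is constant, which is impossible in positive weight.
*)
theory Submission
  imports Defs "HOL-Complex_Analysis.Complex_Analysis"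
begin

section \<open>q-expansions\<close>

definition q_expansion :: "(complex \<Rightarrow> complex) \<Rightarrow> (complex \<Rightarrow> complex) \<Rightarrow> bool" where
  "q_expansion G f \<longleftrightarrow> G holomorphic_on ball 0 1 \<and>
     (\<forall>z\<in>UHP. G (exp (2 * of_real pi * \<i> * z)) = f z)"

lemma exp_2pi_i_mem_ball:
  assumes "z \<in> UHP"
  shows "exp (2 * of_real pi * \<i> * z) \<in> ball 0 1"
  using assms by (simp add: UHP_def)

lemma exp_2pi_i_add_i:
  "exp (2 * of_real pi * \<i> * (of_real x + \<i>)) =
     of_real (exp (-2 * pi)) * exp (2 * of_real pi * \<i> * of_real x)"
proof -
  have "exp (2 * of_real pi * \<i> * (of_real x + \<i>)) =
      exp (2 * of_real pi * \<i> * of_real x + of_real (-2 * pi))"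
    by (simp add: algebra_simps)
  then show ?thesis
    by (simp only: exp_add exp_of_real mult.commute)
qed

lemma circlepath_eq_exp_2pi_i:
  "circlepath 0 (exp (-2 * pi)) x = exp (2 * of_real pi * \<i> * (of_real x + \<i>))"
  by (simp add: circlepath exp_2pi_i_add_i)

lemma vector_derivative_circlepath_eq_exp_2pi_i:
  "vector_derivative (circlepath 0 (exp (-2 * pi))) (at x) =
     2 * pi * \<i> * exp (2 * of_real pi * \<i> * (of_real x + \<i>))"
  unfolding vector_derivative_circlepath exp_2pi_i_add_i by (simp add: mult.assoc)

text \<open>The segment \<open>x + \<i>\<close>, \<open>0 \<le> x \<le> 1\<close>, is mapped by \<open>q = exp (2\<pi>\<i>z)\<close> onto the circle of radius
  \<open>exp (-2\<pi>)\<close>, so \<open>qcoeff\<close> is Cauchy's integral for a Taylor coefficient.\<close>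

lemma qcoeff_eq_higher_deriv:
  assumes "q_expansion G f"
  shows "qcoeff f n = (deriv ^^ n) G 0 / fact n"
proof -
  define r where "r = exp (-2 * pi)"
  define E where "E x = exp (2 * of_real pi * \<i> * (of_real x + \<i>))" for x :: real
  have G: "G holomorphic_on ball 0 1" and f: "f (of_real x + \<i>) = G (E x)" for x
    using assms by (auto simp: q_expansion_def E_def UHP_def)
  have "r < 1" by (simp add: r_def)
  then have r_sub: "cball 0 r \<subseteq> ball (0::complex) 1" by auto
  have cauchy: "((\<lambda>u. G u / (u - 0) ^ Suc n) has_contour_integral
      (2 * pi * \<i> / fact n * (deriv ^^ n) G 0)) (circlepath 0 r)"
  proof (rule Cauchy_has_contour_integral_higher_derivative_circlepath)
    show "continuous_on (cball 0 r) G"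
      using G r_sub holomorphic_on_imp_continuous_on continuous_on_subset by blast
    show "G holomorphic_on ball 0 r"
      using G r_sub ball_subset_cball holomorphic_on_subset by blast
  qed (simp_all add: r_def)
  have "G (circlepath 0 r x) / (circlepath 0 r x - 0) ^ Suc n * vector_derivative (circlepath 0 r) (at x)
      = 2 * pi * \<i> * (f (of_real x + \<i>) * exp (- 2 * of_real pi * \<i> * of_nat n * (of_real x + \<i>)))"
    for x
  proof -
    have "E x ^ n = exp (of_nat n * (2 * of_real pi * \<i> * (of_real x + \<i>)))"
      unfolding E_def by (simp add: exp_of_nat_mult)
    then have "E x ^ n * exp (- 2 * of_real pi * \<i> * of_nat n * (of_real x + \<i>)) = 1"
      by (simp add: exp_add[symmetric] algebra_simps)
    moreover have "E x \<noteq> 0" by (simp add: E_def)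
    ultimately have "exp (- 2 * of_real pi * \<i> * of_nat n * (of_real x + \<i>)) = 1 / E x ^ n"
      by (simp add: field_simps)
    with \<open>E x \<noteq> 0\<close> show ?thesis
      unfolding r_def circlepath_eq_exp_2pi_i vector_derivative_circlepath_eq_exp_2pi_i
        E_def[symmetric] f by (simp add: field_simps)
  qed
  then have "((\<lambda>x. 2 * pi * \<i> * (f (of_real x + \<i>) * exp (- 2 * of_real pi * \<i> * of_nat n * (of_real x + \<i>))))
       has_integral (2 * pi * \<i> / fact n * (deriv ^^ n) G 0)) {0..1}"
    using cauchy unfolding has_contour_integral by simp
  then have "((\<lambda>x. f (of_real x + \<i>) * exp (- 2 * of_real pi * \<i> * of_nat n * (of_real x + \<i>)))
       has_integral ((deriv ^^ n) G 0 / fact n)) {0..1}"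
    by (subst (asm) has_integral_mult_right_iff) auto
  then show ?thesis unfolding qcoeff_def by (rule integral_unique)
qed

lemma qcoeff_mult:
  assumes "q_expansion G f" "q_expansion H g"
  shows "qcoeff (\<lambda>z. f z * g z) n = (\<Sum>i\<le>n. qcoeff f i * qcoeff g (n - i))"
proof -
  have G: "G holomorphic_on ball 0 1" and H: "H holomorphic_on ball 0 1"
    using assms by (simp_all add: q_expansion_def)
  have "q_expansion (\<lambda>q. G q * H q) (\<lambda>z. f z * g z)"
    using assms by (auto simp: q_expansion_def intro: holomorphic_intros)
  then have "qcoeff (\<lambda>z. f z * g z) n = (deriv ^^ n) (\<lambda>q. G q * H q) 0 / fact n"
    by (rule qcoeff_eq_higher_deriv)
  also have "\<dots> = (\<Sum>i\<le>n. of_nat (n choose i) * (deriv ^^ i) G 0 * (deriv ^^ (n - i)) H 0) / fact n"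
    using higher_deriv_mult[OF G H] by (simp add: atLeast0AtMost)
  also have "\<dots> = (\<Sum>i\<le>n. (deriv ^^ i) G 0 / fact i * ((deriv ^^ (n - i)) H 0 / fact (n - i)))"
    unfolding sum_divide_distrib by (intro sum.cong refl) (simp add: binomial_fact)
  also have "\<dots> = (\<Sum>i\<le>n. qcoeff f i * qcoeff g (n - i))"
    using assms by (simp add: qcoeff_eq_higher_deriv)
  finally show ?thesis .
qed

lemma q_expansion_eq_qcoeff_0:
  assumes "q_expansion G f" and "\<And>n. 0 < n \<Longrightarrow> qcoeff f n = 0" and "z \<in> UHP"
  shows "f z = qcoeff f 0"
proof -
  have G: "G holomorphic_on ball 0 1"
    using assms(1) by (simp add: q_expansion_def)
  have "(deriv ^^ n) G 0 = 0" if "0 < n" for n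
    using assms(2)[OF that] qcoeff_eq_higher_deriv[OF assms(1), of n] by simp
  then have "G (exp (2 * of_real pi * \<i> * z)) = G 0"
    using exp_2pi_i_mem_ball[OF assms(3)]
    by (intro holomorphic_fun_eq_const_on_connected[OF G]) auto
  then show ?thesis
    using assms(1,3) qcoeff_eq_higher_deriv[OF assms(1), of 0] by (simp add: q_expansion_def)
qed

section \<open>Periodic functions on the upper half-plane\<close>

lemma periodic_eq_if_exp_eq:
  assumes periodic: "\<And>n::int. f (w + of_int n) = f w"
    and "exp (2 * of_real pi * \<i> * z) = exp (2 * of_real pi * \<i> * w)"
  shows "f z = f w"
proof -
  obtain n :: int where "2 * of_real pi * \<i> * z = 2 * of_real pi * \<i> * w + of_int (2 * n) * pi * \<i>"
    using assms(2) unfolding exp_eq by blast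
  then have "2 * of_real pi * \<i> * z = 2 * of_real pi * \<i> * (w + of_int n)"
    by (simp add: algebra_simps)
  then have "z = w + of_int n" by simp
  then show ?thesis using periodic by simp
qed

lemma Im_Ln_div_2pi_i:
  assumes "q \<noteq> 0"
  shows "Im (Ln q / (2 * of_real pi * \<i>)) = - ln (cmod q) / (2 * pi)"
proof -
  have "Ln q / (2 * of_real pi * \<i>) = - \<i> * Ln q / (2 * of_real pi)"
    by (simp add: field_simps)
  then show ?thesis using assms by (simp add: Re_Ln)
qed

lemma Ln_div_2pi_i_mem_UHP:
  assumes "q \<in> ball 0 1 - {0}"
  shows "Ln q / (2 * of_real pi * \<i>) \<in> UHP"
  using assms Im_Ln_div_2pi_i[of q] by (simp add: UHP_def divide_neg_pos)

lemma periodic_holomorphic_on_punctured_disc: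
  assumes holo: "f holomorphic_on UHP"
    and periodic: "\<And>z n. z \<in> UHP \<Longrightarrow> f (z + of_int n) = f z"
  shows "(\<lambda>q. f (Ln q / (2 * of_real pi * \<i>))) holomorphic_on ball 0 1 - {0}"
    (is "?F holomorphic_on _")
proof -
  define L where "L q = Ln q / (2 * of_real pi * \<i>)" for q
  define D where "D = ball (0::complex) 1 - {0}"
  have L_UHP: "L q \<in> UHP" if "q \<in> D" for q
    using Ln_div_2pi_i_mem_UHP that by (simp add: L_def D_def)
  have "?F holomorphic_on D - \<real>\<^sub>\<le>\<^sub>0"
  proof -
    have "L holomorphic_on D - \<real>\<^sub>\<le>\<^sub>0"
      unfolding L_def by (intro holomorphic_intros) auto
    then have "(f \<circ> L) holomorphic_on D - \<real>\<^sub>\<le>\<^sub>0"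
      using holo L_UHP by (intro holomorphic_on_compose_gen) auto
    then show ?thesis by (simp add: L_def o_def)
  qed
  moreover have "?F holomorphic_on D - \<real>\<^sub>\<ge>\<^sub>0"
  proof -
    text \<open>Off the positive axis use the branch \<open>q \<mapsto> L (-q) + 1/2\<close> instead.\<close>
    define M where "M q = L (- q) + 1/2" for q
    have M_UHP: "M q \<in> UHP" if "q \<in> D" for q
      using L_UHP[of "-q"] that by (simp add: M_def D_def UHP_def)
    have exp_M: "exp (2 * of_real pi * \<i> * M q) = q" if "q \<noteq> 0" for q
    proof -
      have "exp (2 * of_real pi * \<i> * M q) = exp (2 * of_real pi * \<i> * L (- q) + of_real pi * \<i>)"
        by (simp add: M_def algebra_simps)
      also have "\<dots> = exp (2 * of_real pi * \<i> * L (- q)) * exp (of_real pi * \<i>)"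
        by (rule exp_add)
      finally show ?thesis using that by (simp add: L_def)
    qed
    have "M holomorphic_on D - \<real>\<^sub>\<ge>\<^sub>0"
      unfolding M_def L_def
    proof (intro holomorphic_intros)
      show "- q \<notin> \<real>\<^sub>\<le>\<^sub>0" if "q \<in> D - \<real>\<^sub>\<ge>\<^sub>0" for q
        using that by (auto simp: nonpos_Reals_def nonneg_Reals_def)
          (metis minus_minus neg_0_le_iff_le of_real_minus)
    qed auto
    then have "(f \<circ> M) holomorphic_on D - \<real>\<^sub>\<ge>\<^sub>0"
      using holo M_UHP by (intro holomorphic_on_compose_gen) auto
    moreover have "(f \<circ> M) q = ?F q" if "q \<in> D - \<real>\<^sub>\<ge>\<^sub>0" for q
    proof -
      have "q \<noteq> 0" "q \<in> D" using that by (auto simp: D_def)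
      then have "exp (2 * of_real pi * \<i> * L q) = exp (2 * of_real pi * \<i> * M q)"
        using exp_M by (simp add: L_def)
      then have "f (L q) = f (M q)"
        by (rule periodic_eq_if_exp_eq[OF periodic[OF M_UHP[OF \<open>q \<in> D\<close>]]])
      then show ?thesis by (simp add: L_def)
    qed
    ultimately show ?thesis
      by (rule holomorphic_transform)
  qed
  moreover have "(D - \<real>\<^sub>\<le>\<^sub>0) \<union> (D - \<real>\<^sub>\<ge>\<^sub>0) = D"
    by (auto simp: D_def nonpos_Reals_def nonneg_Reals_def)
  moreover have "open (D - \<real>\<^sub>\<le>\<^sub>0)" "open (D - \<real>\<^sub>\<ge>\<^sub>0)"
    by (auto simp: D_def intro!: open_Diff)
  ultimately show ?thesis
    using holomorphic_on_Un[of ?F "D - \<real>\<^sub>\<le>\<^sub>0" "D - \<real>\<^sub>\<ge>\<^sub>0"] by (simp add: D_def)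
qed

lemma periodic_bounded_holomorphic_has_q_expansion:
  assumes holo: "f holomorphic_on UHP"
    and periodic: "\<And>z n. z \<in> UHP \<Longrightarrow> f (z + of_int n) = f z"
    and bounded: "\<And>z. Im z > C \<Longrightarrow> cmod (f z) \<le> B"
  obtains G where "q_expansion G f"
proof -
  define F where "F = (\<lambda>q. f (Ln q / (2 * of_real pi * \<i>)))"
  have F_holo: "F holomorphic_on ball 0 1 - {0}"
    using periodic_holomorphic_on_punctured_disc[OF holo periodic] by (simp only: F_def)
  have "cmod (F q) \<le> B" if "q \<noteq> 0" "cmod q < exp (- (C * (2 * pi)))" for q
  proof -
    have "ln (cmod q) < ln (exp (- (C * (2 * pi))))"
      using that by (subst ln_less_cancel_iff) auto
    then have "C * (2 * pi) < - ln (cmod q)"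
      by simp
    then have "C < - ln (cmod q) / (2 * pi)"
      by (subst pos_less_divide_eq) auto
    then have "C < Im (Ln q / (2 * of_real pi * \<i>))"
      using Im_Ln_div_2pi_i[OF that(1)] by simp
    then show ?thesis unfolding F_def by (rule bounded)
  qed
  then have "eventually (\<lambda>q. cmod (F q) \<le> B) (at 0)"
    unfolding eventually_at by (intro exI[of _ "exp (- (C * (2 * pi)))"]) auto
  then obtain G where G: "G holomorphic_on ball 0 1" "\<And>q. q \<in> ball 0 1 - {0} \<Longrightarrow> G q = F q"
    using holomorphic_on_extend_bounded[OF F_holo] by auto
  have "G (exp (2 * of_real pi * \<i> * z)) = f z" if "z \<in> UHP" for z
  proof -
    let ?q = "exp (2 * of_real pi * \<i> * z)"
    have "G ?q = F ?q" using G(2) exp_2pi_i_mem_ball[OF that] by simp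
    also have "\<dots> = f z"
      unfolding F_def by (intro periodic_eq_if_exp_eq[OF periodic[OF that]]) simp
    finally show ?thesis .
  qed
  with G(1) show ?thesis by (intro that[of G]) (simp add: q_expansion_def)
qed

section \<open>Modular forms\<close>

lemma modular_form_periodic:
  assumes "modular_form k N chr f" "chr 1 = 1" "z \<in> UHP"
  shows "f (z + of_int n) = f z"
proof -
  have "(1, n, 0, 1) \<in> Gamma0 N" by (simp add: Gamma0_def SL2Z_def)
  then show ?thesis
    using assms unfolding modular_form_def
    by (force simp: moebius_def autfac_def lower_right_def add.commute)
qed

lemma modular_form_bounded_at_infinity:
  assumes "modular_form k N chr f"
  obtains C B where "\<And>z. Im z > C \<Longrightarrow> cmod (f z) \<le> B"
proof -
  have "(1, 0, 0, 1) \<in> SL2Z" by (simp add: SL2Z_def)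
  then obtain C B where "\<forall>z. Im z > C \<longrightarrow>
      cmod (f (moebius (1, 0, 0, 1) z) / autfac (1, 0, 0, 1) z ^ k) \<le> B"
    using assms unfolding modular_form_def by blast
  then show ?thesis
    by (intro that[of C B]) (simp add: moebius_def autfac_def)
qed

lemma modular_form_has_q_expansion:
  assumes "modular_form k N chr f" "chr 1 = 1"
  obtains G where "q_expansion G f"
proof -
  obtain C B where "\<And>z. Im z > C \<Longrightarrow> cmod (f z) \<le> B"
    using modular_form_bounded_at_infinity[OF assms(1)] by blast
  moreover have "f holomorphic_on UHP"
    using assms(1) by (simp add: modular_form_def)
  ultimately show ?thesis
    using periodic_bounded_holomorphic_has_q_expansion modular_form_periodic[OF assms] that
    by blast
qed

lemma modular_form_mult_qcoeff:
  assumes "modular_form k N chr f" "chr 1 = 1" "modular_form l N chr' g" "chr' 1 = 1"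
  shows "qcoeff (\<lambda>z. f z * g z) n = (\<Sum>i\<le>n. qcoeff f i * qcoeff g (n - i))"
  using modular_form_has_q_expansion[OF assms(1,2)] modular_form_has_q_expansion[OF assms(3,4)]
    qcoeff_mult by metis

text \<open>Apply the transformation law to \<open>(1, 0, N, 1)\<close> at \<open>\<i>\<close>: the automorphy factor
  \<open>1 + N\<i>\<close> has modulus greater than \<open>1\<close>.\<close>

lemma modular_form_constant_eq_0:
  assumes "modular_form k N chr f" "dirichlet_character N chr" "0 < k"
    and "\<forall>z\<in>UHP. f z = c"
  shows "c = 0"
proof (rule ccontr)
  assume "c \<noteq> 0"
  have "N > 0" "chr 1 = 1" using assms(2) by (simp_all add: dirichlet_character_def)
  have "(1, 0, int N, 1) \<in> Gamma0 N" by (simp add: Gamma0_def SL2Z_def)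
  moreover have "\<i> \<in> UHP" "moebius (1, 0, int N, 1) \<i> \<in> UHP"
    by (simp_all add: moebius_def UHP_def Im_divide power2_eq_square add_pos_nonneg)
  ultimately have "c = (of_nat N * \<i> + 1) ^ k * c"
    using assms(1,4) \<open>chr 1 = 1\<close> unfolding modular_form_def
    by (force simp: lower_right_def autfac_def)
  with \<open>c \<noteq> 0\<close> have unit: "cmod (of_nat N * \<i> + 1) ^ k = 1"
    by (metis mult_cancel_right1 norm_one norm_power)
  have "cmod (of_nat N * \<i> + 1) = sqrt (1 + (real N)\<^sup>2)"
    by (simp add: cmod_def)
  also have "\<dots> > 1" using \<open>N > 0\<close> by (simp add: real_less_rsqrt)
  finally have "1 < cmod (of_nat N * \<i> + 1) ^ k"
    using assms(3) by (simp add: one_less_power)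
  with unit show False by simp
qed

section \<open>Hecke eigenforms\<close>

lemma hecke_coeff_at_1:
  assumes "chr 1 = 1"
  shows "hecke_coeff k chr n f 1 = qcoeff f n"
proof -
  have "{d. d dvd gcd 1 n} = {1::nat}" by auto
  then show ?thesis using assms by (simp add: hecke_coeff_def)
qed

lemma hecke_coeff_2_at_0:
  assumes "chr 1 = 1" "chr 2 = 0"
  shows "hecke_coeff k chr 2 f 0 = qcoeff f 0"
proof -
  have "{d::nat. d dvd 2} = {1, 2}"
    using two_is_prime_nat by (auto simp: prime_nat_iff)
  then show ?thesis using assms by (simp add: hecke_coeff_def)
qed

lemma hecke_eigenform_qcoeff_vanish:
  assumes "hecke_eigenform k N chr f" "chr 1 = 1" "qcoeff f 1 = 0" "0 < n"
  shows "qcoeff f n = 0"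
proof -
  have "n \<ge> 1" using assms(4) by simp
  then obtain ev where "hecke_coeff k chr n f 1 = ev * qcoeff f 1"
    using assms(1) unfolding hecke_eigenform_def by blast
  then show ?thesis using assms(3) hecke_coeff_at_1[where chr = chr, OF assms(2)] by simp
qed

lemma hecke_eigenform_qcoeff_1_nonzero:
  assumes "hecke_eigenform k N chr f" "dirichlet_character N chr" "0 < k"
  shows "qcoeff f 1 \<noteq> 0"
proof
  assume "qcoeff f 1 = 0"
  have mf: "modular_form k N chr f" and chr1: "chr 1 = 1"
    using assms(1,2) by (simp_all add: hecke_eigenform_def dirichlet_character_def)
  obtain G where "q_expansion G f"
    using modular_form_has_q_expansion[OF mf chr1] .
  then have "\<forall>z\<in>UHP. f z = qcoeff f 0"
    using hecke_eigenform_qcoeff_vanish[OF assms(1) chr1 \<open>qcoeff f 1 = 0\<close>]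
    by (blast intro: q_expansion_eq_qcoeff_0)
  moreover from this have "qcoeff f 0 = 0"
    by (rule modular_form_constant_eq_0[OF mf assms(2,3)])
  ultimately show False
    using assms(1) by (auto simp: hecke_eigenform_def)
qed

text \<open>With \<open>chr 2 = 0\<close>, the constant term of \<open>T\<^sub>2 f\<close> is that of \<open>f\<close>, so the
  eigenvalue is \<open>1\<close>.\<close>

lemma hecke_eigenform_qcoeff_2_eq_1:
  assumes "hecke_eigenform k N chr f" "chr 1 = 1" "chr 2 = 0" "qcoeff f 0 \<noteq> 0"
  shows "qcoeff f 2 = qcoeff f 1"
proof -
  obtain ev where ev: "\<And>m. hecke_coeff k chr 2 f m = ev * qcoeff f m"
    using assms(1) unfolding hecke_eigenform_def by force
  have "ev = 1"
    using ev[of 0] assms by (simp add: hecke_coeff_2_at_0)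
  then show ?thesis
    using ev[of 1] hecke_coeff_at_1[where chr = chr, OF assms(2)] by simp
qed

theorem proposition6p2:
  fixes N k l :: nat and \<psi> \<phi> :: "int \<Rightarrow> complex"
  assumes "even N"
    and "dirichlet_character N \<psi>" and "dirichlet_character N \<phi>"
    and "1 < k" and "k \<le> l"
  shows "\<not> (\<exists>f g. hecke_eigenform k N \<psi> f \<and> hecke_eigenform l N \<phi> g \<and>
              qcoeff f 0 \<noteq> 0 \<and> qcoeff g 0 \<noteq> 0 \<and>
              hecke_eigenform (k + l) N (\<lambda>a. \<psi> a * \<phi> a) (\<lambda>z. f z * g z))"
proof
  assume "\<exists>f g. hecke_eigenform k N \<psi> f \<and> hecke_eigenform l N \<phi> g \<and>
              qcoeff f 0 \<noteq> 0 \<and> qcoeff g 0 \<noteq> 0 \<and>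
              hecke_eigenform (k + l) N (\<lambda>a. \<psi> a * \<phi> a) (\<lambda>z. f z * g z)"
  then obtain f g where f: "hecke_eigenform k N \<psi> f" and g: "hecke_eigenform l N \<phi> g"
    and f0: "qcoeff f 0 \<noteq> 0" and g0: "qcoeff g 0 \<noteq> 0"
    and fg: "hecke_eigenform (k + l) N (\<lambda>a. \<psi> a * \<phi> a) (\<lambda>z. f z * g z)"
    by blast
  have "\<not> coprime (2::int) (int N)" using \<open>even N\<close> by simp
  then have \<psi>: "\<psi> 1 = 1" "\<psi> 2 = 0" and \<phi>: "\<phi> 1 = 1" "\<phi> 2 = 0"
    using assms(2,3) by (auto simp: dirichlet_character_def)
  have "modular_form k N \<psi> f" "modular_form l N \<phi> g"
    using f g by (simp_all add: hecke_eigenform_def)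
  note coeff_fg = modular_form_mult_qcoeff[OF this(1) \<psi>(1) this(2) \<phi>(1)]
  have "qcoeff (\<lambda>z. f z * g z) 2 = qcoeff (\<lambda>z. f z * g z) 1"
    using hecke_eigenform_qcoeff_2_eq_1[OF fg] \<psi> \<phi> coeff_fg[of 0] f0 g0 by simp
  then have "qcoeff f 1 * qcoeff g 1 = 0"
    using hecke_eigenform_qcoeff_2_eq_1[OF f \<psi> f0] hecke_eigenform_qcoeff_2_eq_1[OF g \<phi> g0]
    by (simp add: coeff_fg numeral_2_eq_2 algebra_simps)
  moreover have "qcoeff f 1 \<noteq> 0" "qcoeff g 1 \<noteq> 0"
    using hecke_eigenform_qcoeff_1_nonzero f g assms by auto
  ultimately show False by simp
qed

end
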